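(* Let $z\in\mathcal F_\mathbb Z\setminus\{\Theta\}$, let $(q,r)$ be its lexicographically maximal FPF-visible inversion, and let $m$ be the largest even integer with $z(m)\ne m-1$. Then: - $q$ is the maximal FPF-visible descent of $z$; - $r$ is the maximal integer with $z(r)<\min\{q,z(q)\}$; - $z(q+1)<z(q+2)<\cdots<z(m)\le q$; - either $z(q)<q<r\le m$, or $q<z(q)=r+1=m$.
   Context: Let $S_\mathbb Z$ be the group of finitely supported permutations of $\mathbb Z$. Let $\Theta(i)=i-(-1)^i$ and $\mathcal F_\mathbb Z=\{w^{-1}\Theta w:w\in S_\mathbb Z\}$. A pair $(i,j)\in\mathbb Z\times\mathbb Z$ is an FPF-visible inversion of $z$ if $i<j$ and $z(j)<\min\{i,z(i)\}$. An integer $i$ is an FPF-visible descent of $z$ if $(i,i+1)$ is an FPF-visible inversion. Pairs are ordered lexicographically. *)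

theory Defs
  imports Main
begin

definition SZ :: "(int \<Rightarrow> int) set" where
  "SZ = {w. bij w \<and> finite {i. w i \<noteq> i}}"

definition Theta :: "int \<Rightarrow> int" where
  "Theta i = i - (-1) ^ nat \<bar>i\<bar>"

definition FZ :: "(int \<Rightarrow> int) set" where
  "FZ = {inv w \<circ> Theta \<circ> w | w. w \<in> SZ}"

definition fpf_vis_inv :: "(int \<Rightarrow> int) \<Rightarrow> int \<Rightarrow> int \<Rightarrow> bool" where
  "fpf_vis_inv z i j \<longleftrightarrow> i < j \<and> z j < min i (z i)"

definition fpf_vis_des :: "(int \<Rightarrow> int) \<Rightarrow> int \<Rightarrow> bool" where
  "fpf_vis_des z i \<longleftrightarrow> fpf_vis_inv z i (i + 1)"

definition lex_le :: "int \<times> int \<Rightarrow> int \<times> int \<Rightarrow> bool" where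
  "lex_le p p' \<longleftrightarrow> fst p < fst p' \<or> (fst p = fst p' \<and> snd p \<le> snd p')"

end

theory Submission
  imports Defs
begin

text \<open>Only two properties of \<open>z\<close> matter: it is a fixed-point-free involution, and it agrees
  with \<open>\<Theta>\<close> to the right of \<open>m\<close>. Maximality of \<open>(q, r)\<close> says that no visible inversion starts
  to the right of \<open>q\<close>, i.e. \<open>min i (z i) \<le> z j\<close> whenever \<open>q < i < j\<close>. Applied with \<open>j = m\<close>
  this pins \<open>z m \<le> q\<close>, and then with \<open>j = i + 1\<close> it makes \<open>z\<close> increasing on \<open>(q, m]\<close>.
  The pair \<open>(q, q + 1)\<close> is visible because otherwise \<open>(q + 1, r)\<close> would be a larger
  visible inversion. Finally, if \<open>q < z q\<close>, then \<open>z q\<close> lies in \<open>(q, m]\<close> and, being the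
  preimage of \<open>q \<ge> z m\<close>, must be \<open>m\<close> itself, which forces \<open>r = m - 1\<close>.\<close>

lemma Theta_even: "even i \<Longrightarrow> Theta i = i - 1"
  by (simp add: Theta_def even_nat_iff)

lemma Theta_odd: "odd i \<Longrightarrow> Theta i = i + 1"
  by (simp add: Theta_def even_nat_iff)

lemma Theta_Theta: "Theta (Theta i) = i"
  by (cases "even i") (simp_all add: Theta_even Theta_odd)

lemma Theta_neq: "Theta i \<noteq> i"
  by (cases "even i") (simp_all add: Theta_even Theta_odd)

locale fpf_involution =
  fixes z :: "int \<Rightarrow> int"
  assumes involution [simp]: "z (z i) = i"
    and no_fixpoint: "z i \<noteq> i"
begin

lemma eq_iff [simp]: "z i = z j \<longleftrightarrow> i = j"
  by (metis involution)

end

lemma FZ_imp_fpf_involution: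
  assumes "z \<in> FZ"
  shows "fpf_involution z"
proof
  obtain w where "bij w" and z: "z = inv w \<circ> Theta \<circ> w"
    using assms unfolding FZ_def SZ_def by blast
  then have w_inv: "w (inv w y) = y" and inv_w: "inv w (w y) = y" for y
    by (simp_all add: bij_is_surj surj_f_inv_f bij_is_inj)
  show "z (z i) = i" for i
    by (simp add: z w_inv inv_w Theta_Theta)
  show "z i \<noteq> i" for i
    by (metis z comp_apply w_inv Theta_neq)
qed

locale fpf_involution_max_vis_inv = fpf_involution +
  fixes q r :: int
  assumes vis_inv: "fpf_vis_inv z q r"
    and max_vis_inv: "\<And>i j. fpf_vis_inv z i j \<Longrightarrow> lex_le (i, j) (q, r)"
begin

lemma q_less_r: "q < r" and z_r_less: "z r < min q (z q)"
  using vis_inv by (simp_all add: fpf_vis_inv_def)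

lemma vis_inv_le_max:
  assumes "i < j" and "z j < min i (z i)"
  shows "i < q \<or> (i = q \<and> j \<le> r)"
  using max_vis_inv[of i j] assms by (auto simp: fpf_vis_inv_def lex_le_def)

lemma no_vis_inv_right_of_q:
  assumes "q < i" and "i < j"
  shows "min i (z i) \<le> z j"
  using vis_inv_le_max[of i j] assms by force

lemma vis_des_q: "fpf_vis_des z q"
proof -
  have "z (q + 1) < min q (z q)"
  proof (cases "r = q + 1")
    case False
    with vis_inv_le_max[of "q + 1" r] q_less_r have "min (q + 1) (z (q + 1)) \<le> z r"
      by force
    with z_r_less show ?thesis by linarith
  qed (use z_r_less in simp)
  then show ?thesis by (simp add: fpf_vis_des_def fpf_vis_inv_def)
qed

lemma vis_des_le_q: "fpf_vis_des z i \<Longrightarrow> i \<le> q"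
  using vis_inv_le_max[of i "i + 1"] by (force simp: fpf_vis_des_def fpf_vis_inv_def)

lemma below_min_q_le_r: "z j < min q (z q) \<Longrightarrow> j \<le> r"
  using vis_inv_le_max[of q j] q_less_r by (cases "j \<le> q") auto

end

locale fpf_involution_Theta_above = fpf_involution +
  fixes m :: int
  assumes even_m: "even m"
    and z_m_neq: "z m \<noteq> m - 1"
    and Theta_above: "\<And>n. even n \<Longrightarrow> m < n \<Longrightarrow> z n = n - 1"
begin

lemma above_bound:
  assumes "m < k"
  shows "m < z k \<and> k - 1 \<le> z k"
proof (cases "even k")
  case True
  with even_m assms have "k \<noteq> m + 1" by auto
  with True assms Theta_above show ?thesis by simp
next
  case False
  with assms Theta_above[of "k + 1"] have "z (k + 1) = k" by simp
  then have "z k = k + 1" by (metis involution)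
  with assms show ?thesis by simp
qed

lemma z_m_less: "z m < m - 1"
proof -
  have "\<not> m < z m"
    using above_bound[of "z m"] by auto
  with no_fixpoint[of m] z_m_neq show ?thesis by linarith
qed

end

locale fpf_involution_max_vis_inv_Theta_above =
  fpf_involution_max_vis_inv z q r + fpf_involution_Theta_above z m
  for z q r m
begin

lemma r_le_m: "r \<le> m"
  using above_bound[of r] z_r_less q_less_r by (force simp: min_less_iff_conj)

lemma z_m_le_q: "z m \<le> q"
proof (rule ccontr)
  assume "\<not> z m \<le> q"
  then have q_less: "q < z m" by simp
  define a where "a = z m"
  have "z a = m" by (simp add: a_def)
  txt \<open>Maximality, applied to \<open>(a, a + 1)\<close> and \<open>(a + 1, m)\<close>, forces \<open>z a = a + 1 \<noteq> m\<close>.\<close>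
  have "min (a + 1) (z (a + 1)) \<le> z m"
    using no_vis_inv_right_of_q[of "a + 1" m] q_less z_m_less by (simp add: a_def)
  moreover have "min a (z a) \<le> z (a + 1)"
    using no_vis_inv_right_of_q[of a "a + 1"] q_less by (simp add: a_def)
  ultimately have "z (a + 1) = a"
    using \<open>z a = m\<close> z_m_less by (auto simp: a_def min_le_iff_disj)
  then have "z a = a + 1" by (metis involution)
  with \<open>z a = m\<close> z_m_less show False by (simp add: a_def)
qed

lemma less_z_m:
  assumes "q < i" and "i < m"
  shows "z i < z m"
proof -
  have "z i \<le> z m"
    using no_vis_inv_right_of_q[of i m] z_m_le_q assms by (auto simp: min_le_iff_disj)
  moreover have "z i \<noteq> z m"
    using assms by simp
  ultimately show ?thesis by (rule order_le_neq_trans)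
qed

lemma increasing: "q < i \<Longrightarrow> i < m \<Longrightarrow> z i < z (i + 1)"
proof (cases "i + 1 = m")
  case False
  assume i: "q < i" "i < m"
  with less_z_m z_m_le_q have "z i < i" by fastforce
  with no_vis_inv_right_of_q[of i "i + 1"] i have "z i \<le> z (i + 1)" by simp
  then show ?thesis by (simp add: order_le_less)
qed (use less_z_m in simp)

lemma z_q_cases: "(z q < q \<and> q < r \<and> r \<le> m) \<or> (q < z q \<and> z q = r + 1 \<and> r + 1 = m)"
proof (cases "z q < q")
  case True
  then show ?thesis using q_less_r r_le_m by simp
next
  case False
  with no_fixpoint[of q] have q_less: "q < z q" by linarith
  have "z q \<le> m"
    using above_bound[of "z q"] q_less_r r_le_m by force
  moreover have "\<not> z q < m"
    using less_z_m[of "z q"] q_less z_m_le_q by force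
  ultimately have z_q: "z q = m" by simp
  then have "z m = q" by (metis involution)
  with r_le_m z_r_less have r_less: "r < m" by (cases "r = m") auto
  with less_z_m[of "m - 1"] q_less_r \<open>z m = q\<close> have "z (m - 1) < q"
    by fastforce
  with below_min_q_le_r[of "m - 1"] z_q q_less have "m - 1 \<le> r" by simp
  with r_less z_q q_less show ?thesis by simp
qed

end

theorem lemma3p15:
  fixes z :: "int \<Rightarrow> int" and q r m :: int
  assumes "z \<in> FZ" and "z \<noteq> Theta"
    and "fpf_vis_inv z q r"
    and "\<forall>i j. fpf_vis_inv z i j \<longrightarrow> lex_le (i, j) (q, r)"
    and "even m" and "z m \<noteq> m - 1"
    and "\<forall>n. even n \<and> n > m \<longrightarrow> z n = n - 1"
  shows "(fpf_vis_des z q \<and> (\<forall>i. fpf_vis_des z i \<longrightarrow> i \<le> q))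
    \<and> (z r < min q (z q) \<and> (\<forall>j. z j < min q (z q) \<longrightarrow> j \<le> r))
    \<and> (q < m \<and> (\<forall>i. q < i \<and> i < m \<longrightarrow> z i < z (i + 1)) \<and> z m \<le> q)
    \<and> ((z q < q \<and> q < r \<and> r \<le> m) \<or> (q < z q \<and> z q = r + 1 \<and> r + 1 = m))"
proof -
  interpret fpf_involution z
    using assms(1) by (rule FZ_imp_fpf_involution)
  interpret fpf_involution_max_vis_inv_Theta_above z q r m
    using assms(3-7) by unfold_locales auto
  have "q < m"
    using q_less_r r_le_m by simp
  then show ?thesis
    using vis_des_q vis_des_le_q z_r_less below_min_q_le_r increasing z_m_le_q z_q_cases
    by blast
qed

end
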